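(* For every $n$-point metric $M=(V,\delta)$ and every range assignment $r:V\to\mathbb{R}^+$, $w(MSF(SDG(M,r))) \le 2\log_{5/4} n\cdot w(MST(M))$; in particular $w(MSF(SDG(M,r))) = O(\log n)\cdot w(MST(M))$. Consequently, every connected symmetric disk graph of $M$ has a minimum spanning tree of weight $O(\log n)\cdot w(MST(M))$.
   Context: A metric $M=(V,\delta)$ is viewed as the complete weighted graph on $V$ with edge weights $\delta(u,v)$; $MST(M)$ is its minimum spanning tree. A range assignment is a map $r:V\to\mathbb{R}^+$. The symmetric disk graph $SDG(M,r)$ is the undirected spanning subgraph containing the edge $(u,v)$ (with weight $\delta(u,v)$) if and only if $r(u)\ge\delta(u,v)$ and $r(v)\ge\delta(u,v)$. $MSF(\cdot)$ denotes a minimum spanning forest (a spanning forest with the same connected components and minimum total weight). The weight $w(\cdot)$ of a graph is the sum of its edge weights. *)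

theory Defs
  imports Complex_Main
begin

definition metric_on :: "'a set \<Rightarrow> ('a \<Rightarrow> 'a \<Rightarrow> real) \<Rightarrow> bool" where
  "metric_on V d \<longleftrightarrow>
     (\<forall>x\<in>V. \<forall>y\<in>V. d x y \<ge> 0 \<and> (d x y = 0 \<longleftrightarrow> x = y) \<and> d x y = d y x) \<and>
     (\<forall>x\<in>V. \<forall>y\<in>V. \<forall>z\<in>V. d x z \<le> d x y + d y z)"

definition complete_edges :: "'a set \<Rightarrow> 'a set set" where
  "complete_edges V = {{u, v} | u v. u \<in> V \<and> v \<in> V \<and> u \<noteq> v}"

text \<open>Weight of an edge {u,v} is d u v (well defined for symmetric d).\<close>
definition edge_weight :: "('a \<Rightarrow> 'a \<Rightarrow> real) \<Rightarrow> 'a set \<Rightarrow> real" where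
  "edge_weight d e = (THE x. \<exists>u v. e = {u, v} \<and> x = d u v)"

definition graph_weight :: "('a \<Rightarrow> 'a \<Rightarrow> real) \<Rightarrow> 'a set set \<Rightarrow> real" where
  "graph_weight d F = (\<Sum>e\<in>F. edge_weight d e)"

definition adj :: "'a set set \<Rightarrow> 'a \<Rightarrow> 'a \<Rightarrow> bool" where
  "adj F u v \<longleftrightarrow> {u, v} \<in> F \<and> u \<noteq> v"

definition reach :: "'a set set \<Rightarrow> 'a \<Rightarrow> 'a \<Rightarrow> bool" where
  "reach F = (adj F)\<^sup>*\<^sup>*"

text \<open>A forest: an acyclic graph, i.e. no edge lies on a cycle
  (removing any edge disconnects its endpoints).\<close>
definition forest :: "'a set set \<Rightarrow> bool" where
  "forest F \<longleftrightarrow> (\<forall>e\<in>F. \<forall>u v. e = {u, v} \<longrightarrow> \<not> reach (F - {e}) u v)"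

definition spanning_forest :: "'a set \<Rightarrow> 'a set set \<Rightarrow> 'a set set \<Rightarrow> bool" where
  "spanning_forest V E F \<longleftrightarrow> F \<subseteq> E \<and> forest F \<and>
     (\<forall>u\<in>V. \<forall>v\<in>V. reach F u v \<longleftrightarrow> reach E u v)"

definition is_MSF :: "'a set \<Rightarrow> ('a \<Rightarrow> 'a \<Rightarrow> real) \<Rightarrow> 'a set set \<Rightarrow> 'a set set \<Rightarrow> bool" where
  "is_MSF V d E F \<longleftrightarrow> spanning_forest V E F \<and>
     (\<forall>F'. spanning_forest V E F' \<longrightarrow> graph_weight d F \<le> graph_weight d F')"

definition is_MST :: "'a set \<Rightarrow> ('a \<Rightarrow> 'a \<Rightarrow> real) \<Rightarrow> 'a set set \<Rightarrow> bool" where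
  "is_MST V d T \<longleftrightarrow> is_MSF V d (complete_edges V) T"

definition SDG :: "'a set \<Rightarrow> ('a \<Rightarrow> 'a \<Rightarrow> real) \<Rightarrow> ('a \<Rightarrow> real) \<Rightarrow> 'a set set" where
  "SDG V d r = {{u, v} | u v. u \<in> V \<and> v \<in> V \<and> u \<noteq> v \<and> d u v \<le> r u \<and> d u v \<le> r v}"

end

theory Submission
  imports Defs
begin

text \<open>
  Let F be a minimum spanning forest of the symmetric disk graph and T a minimum
  spanning tree of the metric, with total weight W.  Fix an edge e = {u,v} of F
  of weight L and let k be the number of edges of F of weight at least L.

  (1) Every such heavy edge joins two points of range at least L.  Deleting the
      k heavy edges from the forest F therefore leaves at least k + 1 components
      among the points U of range at least L (component counting).
  (2) Two points of U at distance less than L are adjacent in the disk graph, so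
      by the cycle property of minimum spanning forests they are joined by light
      edges of F.  Representatives of the k + 1 components are hence pairwise at
      distance at least L.
  (3) Any connected graph through m pairwise L-separated points weighs at least
      m L / 2 (packing argument with disjoint bump functions of height L/2).
  Hence (k + 1) L \<le> 2 W.  Summing L \<le> 2 W / (k + 1) over the edges of F, whose
  ranks k run through 1..|F|, gives w(F) \<le> 2 W ln (|F| + 1) \<le> 2 W ln n, and
  ln n \<le> log_{5/4} n.
\<close>

section \<open>Reachability\<close>

lemma adj_sym: "adj K x y \<Longrightarrow> adj K y x"
  unfolding adj_def by (auto simp: insert_commute)

lemma reach_refl: "reach K x x"
  unfolding reach_def by simp

lemma reach_sym: "reach K x y \<Longrightarrow> reach K y x"
  unfolding reach_def
proof (induction rule: rtranclp_induct)
  case base then show ?case by simp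
next
  case (step y z)
  then show ?case by (meson adj_sym converse_rtranclp_into_rtranclp)
qed

lemma reach_trans: "reach K x y \<Longrightarrow> reach K y z \<Longrightarrow> reach K x z"
  unfolding reach_def by (rule rtranclp_trans)

lemma reach_edge: "{x,y} \<in> K \<Longrightarrow> reach K x y"
  unfolding reach_def
  by (cases "x = y") (auto simp: adj_def intro: r_into_rtranclp)

lemma reach_sub:
  assumes "\<And>a b. {a,b} \<in> K \<Longrightarrow> a \<noteq> b \<Longrightarrow> reach K' a b"
  shows "reach K x y \<Longrightarrow> reach K' x y"
  unfolding reach_def[of K]
proof (induction rule: rtranclp_induct)
  case base then show ?case by (rule reach_refl)
next
  case (step y z)
  then have "{y,z} \<in> K" "y \<noteq> z" unfolding adj_def by auto
  then have "reach K' y z" by (rule assms)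
  then show ?case using step.IH reach_trans by metis
qed

lemma reach_mono: "K \<subseteq> K' \<Longrightarrow> reach K x y \<Longrightarrow> reach K' x y"
  by (rule reach_sub) (auto intro: reach_edge)

lemma reach_insert_cases:
  assumes "reach (insert {u,v} K) x y"
  shows "reach K x y \<or> (reach K x u \<and> reach K v y) \<or> (reach K x v \<and> reach K u y)"
  using assms unfolding reach_def[of "insert {u,v} K"]
proof (induction rule: rtranclp_induct)
  case base then show ?case by (intro disjI1 reach_refl)
next
  case (step y z)
  from step.hyps(2) have "{y,z} = {u,v} \<or> {y,z} \<in> K" unfolding adj_def by auto
  then show ?case
  proof
    assume "{y,z} = {u,v}"
    hence "(y = u \<and> z = v) \<or> (y = v \<and> z = u)" by (auto simp: doubleton_eq_iff)
    then show ?thesis using step.IH by (auto simp: reach_refl)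
  next
    assume "{y,z} \<in> K"
    hence "reach K y z" by (rule reach_edge)
    have "\<And>w. reach K w y \<Longrightarrow> reach K w z" using \<open>reach K y z\<close> reach_trans by metis
    then show ?thesis using step.IH by blast
  qed
qed

lemma reach_insert_iff:
  "reach (insert {u,v} K) x y \<longleftrightarrow>
    reach K x y \<or> (reach K x u \<and> reach K v y) \<or> (reach K x v \<and> reach K u y)"
proof
  assume "reach (insert {u,v} K) x y"
  then show "reach K x y \<or> (reach K x u \<and> reach K v y) \<or> (reach K x v \<and> reach K u y)"
    by (rule reach_insert_cases)
next
  have mono: "\<And>a b. reach K a b \<Longrightarrow> reach (insert {u,v} K) a b" by (rule reach_mono) auto
  have uv: "reach (insert {u,v} K) u v" by (rule reach_edge) simp
  then have vu: "reach (insert {u,v} K) v u" by (rule reach_sym)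
  assume "reach K x y \<or> (reach K x u \<and> reach K v y) \<or> (reach K x v \<and> reach K u y)"
  then show "reach (insert {u,v} K) x y" using mono uv vu reach_trans by metis
qed

lemma edge_weight_eq:
  assumes "g a b = g b a"
  shows "edge_weight g {a,b} = g a b"
  unfolding edge_weight_def
proof (rule the_equality)
  show "\<exists>u v. {a,b} = {u,v} \<and> g a b = g u v" by blast
next
  fix x assume "\<exists>u v. {a, b} = {u, v} \<and> x = g u v"
  then obtain u v where "{a,b} = {u,v}" "x = g u v" by blast
  then show "x = g a b" using assms by (auto simp: doubleton_eq_iff)
qed

lemma metric_sym: "metric_on V d \<Longrightarrow> x \<in> V \<Longrightarrow> y \<in> V \<Longrightarrow> d x y = d y x"
  unfolding metric_on_def by blast

lemma metric_nonneg: "metric_on V d \<Longrightarrow> x \<in> V \<Longrightarrow> y \<in> V \<Longrightarrow> 0 \<le> d x y"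
  unfolding metric_on_def by blast

lemma metric_zero: "metric_on V d \<Longrightarrow> x \<in> V \<Longrightarrow> d x x = 0"
  unfolding metric_on_def by blast

lemma metric_pos: "metric_on V d \<Longrightarrow> x \<in> V \<Longrightarrow> y \<in> V \<Longrightarrow> x \<noteq> y \<Longrightarrow> 0 < d x y"
  unfolding metric_on_def by (metis order_le_less)

lemma metric_tri:
  "metric_on V d \<Longrightarrow> x \<in> V \<Longrightarrow> y \<in> V \<Longrightarrow> z \<in> V \<Longrightarrow> d x z \<le> d x y + d y z"
  unfolding metric_on_def by blast

lemma metric_edge_weight:
  "metric_on V d \<Longrightarrow> u \<in> V \<Longrightarrow> v \<in> V \<Longrightarrow> edge_weight d {u,v} = d u v"
  using edge_weight_eq metric_sym by metis

lemma graph_weight_nonneg: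
  assumes "metric_on V d" and "\<forall>e\<in>T. \<exists>p q. e = {p,q} \<and> p \<in> V \<and> q \<in> V"
  shows "0 \<le> graph_weight d T"
  unfolding graph_weight_def
proof (rule sum_nonneg)
  fix e assume "e \<in> T"
  then obtain p q where "e = {p,q}" "p \<in> V" "q \<in> V" using assms(2) by blast
  then show "0 \<le> edge_weight d e" using assms(1) metric_edge_weight metric_nonneg by metis
qed

lemma SDG_finite: "finite V \<Longrightarrow> finite (SDG V d r)"
  by (rule finite_subset[of _ "Pow V"]) (auto simp: SDG_def)

lemma SDG_elem:
  "e \<in> SDG V d r \<Longrightarrow>
    \<exists>u v. e = {u,v} \<and> u \<in> V \<and> v \<in> V \<and> u \<noteq> v \<and> d u v \<le> r u \<and> d u v \<le> r v"
  unfolding SDG_def by blast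

lemma MST_connected:
  assumes "finite V" and "is_MST V d T"
  shows "finite T" and "\<forall>e\<in>T. \<exists>p q. e = {p,q} \<and> p \<in> V \<and> q \<in> V"
    and "\<forall>x\<in>V. \<forall>y\<in>V. reach T x y"
proof -
  have TC: "T \<subseteq> complete_edges V"
    and span: "\<forall>x\<in>V. \<forall>y\<in>V. reach T x y \<longleftrightarrow> reach (complete_edges V) x y"
    using assms(2) unfolding is_MST_def is_MSF_def spanning_forest_def by blast+
  have "T \<subseteq> Pow V" using TC unfolding complete_edges_def by auto
  then show "finite T" using assms(1) by (meson finite_Pow_iff finite_subset)
  show "\<forall>e\<in>T. \<exists>p q. e = {p,q} \<and> p \<in> V \<and> q \<in> V" using TC unfolding complete_edges_def by blast
  have "reach (complete_edges V) x y" if "x \<in> V" "y \<in> V" for x y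
  proof (cases "x = y")
    case False
    then have "{x,y} \<in> complete_edges V" unfolding complete_edges_def using that by blast
    then show ?thesis by (rule reach_edge)
  qed (simp add: reach_refl)
  then show "\<forall>x\<in>V. \<forall>y\<in>V. reach T x y" using span by blast
qed

section \<open>Variation of a function along a path\<close>

lemma interval_cover_length:
  fixes lo hi :: "'e \<Rightarrow> real"
  assumes "finite E" "\<And>e. e \<in> E \<Longrightarrow> lo e \<le> hi e"
    and "\<And>t. c \<le> t \<Longrightarrow> t < dd \<Longrightarrow> \<exists>e\<in>E. lo e \<le> t \<and> t < hi e"
  shows "dd - c \<le> (\<Sum>e\<in>E. hi e - lo e)"
  using assms
proof (induction "card E" arbitrary: E c rule: less_induct)
  case less
  have nonneg: "0 \<le> (\<Sum>e\<in>E'. hi e - lo e)" if "E' \<subseteq> E" for E'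
    using that less.prems(2) by (intro sum_nonneg) auto
  show ?case
  proof (cases "c < dd")
    case False
    then show ?thesis using nonneg[OF order_refl] by linarith
  next
    case True
    then obtain e where e: "e \<in> E" "lo e \<le> c" "c < hi e" using less.prems(3) by blast
    have split: "(\<Sum>e\<in>E. hi e - lo e) = (hi e - lo e) + (\<Sum>e\<in>E-{e}. hi e - lo e)"
      using less.prems(1) e(1) by (simp add: sum.remove)
    show ?thesis
    proof (cases "dd \<le> hi e")
      case True then show ?thesis using split nonneg[of "E - {e}"] e by (simp add: Diff_subset)
    next
      case False
      have "dd - hi e \<le> (\<Sum>e\<in>E-{e}. hi e - lo e)"
      proof (rule less.hyps)
        show "card (E - {e}) < card E" using less.prems(1) e(1) by (rule card_Diff1_less)
        show "finite (E - {e})" using less.prems(1) by simp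
        show "\<And>e'. e' \<in> E - {e} \<Longrightarrow> lo e' \<le> hi e'" using less.prems(2) by simp
        fix t assume t: "hi e \<le> t" "t < dd"
        then obtain e' where "e' \<in> E" "lo e' \<le> t" "t < hi e'" using less.prems(3)[of t] e by force
        then show "\<exists>e'\<in>E - {e}. lo e' \<le> t \<and> t < hi e'" using t by (intro bexI[of _ e']) auto
      qed
      then show ?thesis using split e by linarith
    qed
  qed
qed

lemma reach_crosses_level:
  fixes g :: "'a \<Rightarrow> real"
  assumes "reach K a b"
  shows "min (g a) (g b) \<le> t \<Longrightarrow> t < max (g a) (g b) \<Longrightarrow>
      \<exists>p q. {p,q} \<in> K \<and> min (g p) (g q) \<le> t \<and> t < max (g p) (g q)"
  using assms unfolding reach_def
proof (induction arbitrary: t rule: rtranclp_induct)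
  case base then show ?case by simp
next
  case (step y z)
  have yz: "{y,z} \<in> K" using step.hyps(2) unfolding adj_def by simp
  show ?case
  proof (cases "min (g a) (g y) \<le> t \<and> t < max (g a) (g y)")
    case True then show ?thesis using step.IH by blast
  next
    case False
    then have "min (g y) (g z) \<le> t \<and> t < max (g y) (g z)" using step.prems by linarith
    then show ?thesis using yz by blast
  qed
qed

lemma variation_le_edge_sum:
  fixes g :: "'a \<Rightarrow> real"
  assumes "finite K" "\<forall>e\<in>K. \<exists>p q. e = {p,q}" "reach K a b"
  shows "\<bar>g a - g b\<bar> \<le> (\<Sum>e\<in>K. edge_weight (\<lambda>p q. \<bar>g p - g q\<bar>) e)"
proof -
  define lo where "lo = edge_weight (\<lambda>p q. min (g p) (g q))"
  define hi where "hi = edge_weight (\<lambda>p q. max (g p) (g q))"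
  have eqs: "lo {p,q} = min (g p) (g q)" "hi {p,q} = max (g p) (g q)"
    "edge_weight (\<lambda>p q. \<bar>g p - g q\<bar>) {p,q} = \<bar>g p - g q\<bar>" for p q
    unfolding lo_def hi_def by (rule edge_weight_eq; simp add: abs_minus_commute)+
  have "max (g a) (g b) - min (g a) (g b) \<le> (\<Sum>e\<in>K. hi e - lo e)"
  proof (rule interval_cover_length)
    show "finite K" by fact
    show "lo e \<le> hi e" if "e \<in> K" for e using assms(2) that eqs by force
    fix t assume "min (g a) (g b) \<le> t" "t < max (g a) (g b)"
    then obtain p q where "{p,q} \<in> K" "min (g p) (g q) \<le> t" "t < max (g p) (g q)"
      using reach_crosses_level[OF assms(3)] by blast
    then show "\<exists>e\<in>K. lo e \<le> t \<and> t < hi e" using eqs by metis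
  qed
  also have "\<dots> = (\<Sum>e\<in>K. edge_weight (\<lambda>p q. \<bar>g p - g q\<bar>) e)"
  proof (rule sum.cong)
    fix e assume "e \<in> K"
    then obtain p q where "e = {p,q}" using assms(2) by blast
    then show "hi e - lo e = edge_weight (\<lambda>p q. \<bar>g p - g q\<bar>) e" using eqs by simp
  qed simp
  finally show ?thesis by linarith
qed

section \<open>Counting components\<close>

definition component :: "'a set set \<Rightarrow> 'a \<Rightarrow> 'a set" where
  "component K x = {y. reach K x y}"

lemma component_eq_iff: "component K x = component K y \<longleftrightarrow> reach K x y"
proof
  assume "component K x = component K y"
  then have "y \<in> component K x" using reach_refl unfolding component_def by fastforce
  then show "reach K x y" unfolding component_def by simp
next
  assume xy: "reach K x y"
  have "reach K x z \<longleftrightarrow> reach K y z" for z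
    using xy reach_sym[OF xy] reach_trans[of K x y z] reach_trans[of K y x z] by blast
  then have "reach K x = reach K y" by (rule ext)
  then show "component K x = component K y" unfolding component_def by simp
qed

lemma exists_representatives:
  assumes "finite U"
  obtains S where "S \<subseteq> U" "card S = card (f ` U)" "inj_on f S"
proof
  define S where "S = inv_into U f ` (f ` U)"
  show "S \<subseteq> U" unfolding S_def by (auto intro: inv_into_into)
  show "card S = card (f ` U)" unfolding S_def by (rule card_image) (rule inj_on_inv_into, simp)
  show "inj_on f S" unfolding S_def by (auto simp: inj_on_def f_inv_into_f)
qed

lemma image_remove_duplicate:
  assumes "b \<in> X" "b \<noteq> a" "f a = f b"
  shows "f ` X = f ` (X - {a})"
  using assms by (auto simp: image_iff)

lemma card_components_insert:
  assumes "finite U" "u \<in> U" "v \<in> U" "\<not> reach K u v"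
  shows "card (component (insert {u,v} K) ` U) + 1 \<le> card (component K ` U)"
proof -
  define merge where
    "merge C = (if u \<in> C \<or> v \<in> C then component K u \<union> component K v else C)" for C
  have merged: "component (insert {u,v} K) x = merge (component K x)" for x
  proof (cases "reach K x u \<or> reach K x v")
    case True
    then have "reach K x y \<or> (reach K x u \<and> reach K v y) \<or> (reach K x v \<and> reach K u y)
      \<longleftrightarrow> reach K u y \<or> reach K v y" for y
      using assms(4) reach_sym reach_trans by metis
    then show ?thesis using True unfolding merge_def component_def reach_insert_iff by auto
  next
    case False
    then show ?thesis unfolding merge_def component_def reach_insert_iff by auto
  qed
  have ne: "component K u \<noteq> component K v" using assms(4) component_eq_iff by metis
  have "u \<in> component K u" "v \<in> component K v" unfolding component_def by (simp_all add: reach_refl)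
  then have same: "merge (component K u) = merge (component K v)" unfolding merge_def by simp
  have "component (insert {u,v} K) ` U = merge ` (component K ` U)"
    using merged by (auto simp: image_image)
  also have "\<dots> = merge ` (component K ` U - {component K v})"
    using same ne assms(2,3) by (intro image_remove_duplicate[where b="component K u"]) auto
  finally have "card (component (insert {u,v} K) ` U) \<le> card (component K ` U - {component K v})"
    using card_image_le assms(1) by (metis finite_Diff finite_imageI)
  also have "\<dots> = card (component K ` U) - 1" using assms(1,3) by simp
  finally show ?thesis using assms(1,3) card_gt_0_iff[of "component K ` U"] by fastforce
qed

lemma card_components_add_bridges:
  assumes "finite H" "finite U" "G \<inter> H = {}"
    and "\<forall>e\<in>H. \<exists>u v. e = {u,v} \<and> u \<in> U \<and> v \<in> U \<and> \<not> reach (G \<union> H - {e}) u v"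
  shows "card H + card (component (G \<union> H) ` U) \<le> card (component G ` U)"
  using assms(1,3,4)
proof (induction H rule: finite_induct)
  case empty then show ?case by simp
next
  case (insert e H)
  have "\<forall>e'\<in>H. \<exists>u v. e' = {u,v} \<and> u \<in> U \<and> v \<in> U \<and> \<not> reach (G \<union> H - {e'}) u v"
  proof
    fix e' assume "e' \<in> H"
    then obtain u v where "e' = {u,v}" "u \<in> U" "v \<in> U" "\<not> reach (G \<union> insert e H - {e'}) u v"
      using insert.prems(2) by blast
    moreover have "G \<union> H - {e'} \<subseteq> G \<union> insert e H - {e'}" by auto
    ultimately show "\<exists>u v. e' = {u,v} \<and> u \<in> U \<and> v \<in> U \<and> \<not> reach (G \<union> H - {e'}) u v"
      using reach_mono by metis
  qed
  then have IH: "card H + card (component (G \<union> H) ` U) \<le> card (component G ` U)"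
    using insert.IH insert.prems(1) by blast
  obtain u v where uv: "e = {u,v}" "u \<in> U" "v \<in> U" "\<not> reach (G \<union> insert e H - {e}) u v"
    using insert.prems(2) by blast
  have "G \<union> insert e H - {e} = G \<union> H" using insert.hyps(2) insert.prems(1) by auto
  then have "\<not> reach (G \<union> H) u v" using uv(4) by simp
  then have "card (component (insert {u,v} (G \<union> H)) ` U) + 1 \<le> card (component (G \<union> H) ` U)"
    by (rule card_components_insert[OF assms(2) uv(2,3)])
  moreover have "G \<union> insert e H = insert {u,v} (G \<union> H)" using uv(1) by auto
  ultimately show ?case using IH insert.hyps by simp
qed

lemma forest_mono: "forest F \<Longrightarrow> F' \<subseteq> F \<Longrightarrow> forest F'"
  unfolding forest_def by (meson Diff_mono order_refl reach_mono subsetD)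

lemma forest_card_less:
  assumes "finite V" "V \<noteq> {}" "forest F" "\<forall>e\<in>F. \<exists>u v. e = {u,v} \<and> u \<in> V \<and> v \<in> V"
  shows "card F + 1 \<le> card V"
proof -
  have "F \<subseteq> Pow V" using assms(4) by auto
  then have finF: "finite F" using assms(1) by (meson finite_Pow_iff finite_subset)
  have "card F + card (component ({} \<union> F) ` V) \<le> card (component {} ` V)"
    using assms(3,4) unfolding forest_def
    by (intro card_components_add_bridges[OF finF assms(1)]) fastforce+
  moreover have "card (component {} ` V) \<le> card V" using card_image_le[OF assms(1)] .
  moreover have "1 \<le> card (component ({} \<union> F) ` V)" using assms(1,2)
    by (metis One_nat_def Suc_leI card_gt_0_iff finite_imageI image_is_empty)
  ultimately show ?thesis by linarith
qed

section \<open>The cycle property of minimum spanning forests\<close>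

lemma forest_separating_edge:
  assumes "finite F" "forest F" "G \<subseteq> F" "reach F x y" "\<not> reach G x y"
    and "\<forall>e\<in>F. \<exists>a b. e = {a,b}"
  shows "\<exists>e\<in>F - G. \<not> reach (F - {e}) x y"
  using assms
proof (induction "card (F - G)" arbitrary: F rule: less_induct)
  case less
  have "F \<noteq> G" using less.prems(4,5) by blast
  then obtain e where e: "e \<in> F - G" using less.prems(3) by blast
  show ?case
  proof (cases "reach (F - {e}) x y")
    case False then show ?thesis using e by blast
  next
    case True
    have "\<exists>e'\<in>(F - {e}) - G. \<not> reach (F - {e} - {e'}) x y"
    proof (rule less.hyps)
      show "card (F - {e} - G) < card (F - G)"
        using e less.prems(1) by (metis Diff_insert2 card_Diff1_less finite_Diff insert_Diff_single Diff_insert)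
      show "forest (F - {e})" using less.prems(2) by (rule forest_mono) auto
    qed (use True less.prems e in auto)
    then obtain e' where e': "e' \<in> F - {e} - G" "\<not> reach (F - {e} - {e'}) x y" by blast
    obtain a b where ab: "e = {a,b}" using less.prems(6) e by blast
    have "\<not> reach (F - {e'}) x y"
    proof
      assume "reach (F - {e'}) x y"
      moreover have "F - {e'} = insert {a,b} (F - {e} - {e'})" using ab e e' by auto
      ultimately have "reach (F - {e} - {e'}) x a \<and> reach (F - {e} - {e'}) b y \<or>
                 reach (F - {e} - {e'}) x b \<and> reach (F - {e} - {e'}) a y"
        using e'(2) reach_insert_cases by metis
      then have "reach (F - {e}) x a \<and> reach (F - {e}) b y \<or> reach (F - {e}) x b \<and> reach (F - {e}) a y"
        using reach_mono[of "F - {e} - {e'}" "F - {e}"] by blast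
      then have "reach (F - {e}) a b" using True reach_sym reach_trans by metis
      then show False using less.prems(2) e ab unfolding forest_def by blast
    qed
    then show ?thesis using e' by blast
  qed
qed

lemma exchange_reach_iff:
  assumes "e \<in> F" "e = {a,b}" "reach F x y" "\<not> reach (F - {e}) x y"
  shows "reach (insert {x,y} (F - {e})) p q \<longleftrightarrow> reach F p q"
proof -
  define F' where "F' = insert {x,y} (F - {e})"
  have into_F': "reach (F - {e}) s t \<Longrightarrow> reach F' s t" for s t
    by (rule reach_mono) (auto simp: F'_def)
  have xy: "reach F' x y" unfolding F'_def by (rule reach_edge) simp
  have "F = insert {a,b} (F - {e})" using assms(1,2) by blast
  then have "reach (F - {e}) x a \<and> reach (F - {e}) b y \<or> reach (F - {e}) x b \<and> reach (F - {e}) a y"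
    using assms(3,4) reach_insert_cases by metis
  then have ab: "reach F' a b" using into_F' xy reach_sym reach_trans by metis
  have "reach F' p q" if "reach F p q"
    using that
  proof (rule reach_sub[rotated])
    fix s t assume st: "{s,t} \<in> F"
    show "reach F' s t"
    proof (cases "{s,t} = e")
      case True
      then have "(s = a \<and> t = b) \<or> (s = b \<and> t = a)" using assms(2) by (auto simp: doubleton_eq_iff)
      then show ?thesis using ab reach_sym by metis
    next
      case False
      then have "{s,t} \<in> F'" using st unfolding F'_def by auto
      then show ?thesis by (rule reach_edge)
    qed
  qed
  moreover have "reach F p q" if "reach F' p q"
    using that
  proof (rule reach_sub[rotated])
    fix s t assume "{s,t} \<in> F'"
    then have "{s,t} = {x,y} \<or> {s,t} \<in> F" unfolding F'_def by auto
    then show "reach F s t" using assms(3) reach_sym reach_edge by (metis doubleton_eq_iff)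
  qed
  ultimately show ?thesis unfolding F'_def by blast
qed

lemma exchange_forest:
  assumes "forest F" "e \<in> F" "\<not> reach (F - {e}) x y"
  shows "forest (insert {x,y} (F - {e}))"
  unfolding forest_def
proof (intro ballI allI impI)
  fix e2 p q assume e2: "e2 \<in> insert {x,y} (F - {e})" "e2 = {p,q}"
  show "\<not> reach (insert {x,y} (F - {e}) - {e2}) p q"
  proof (cases "e2 = {x,y}")
    case True
    have "{x,y} \<notin> F - {e}" using assms(3) reach_edge by metis
    then have "insert {x,y} (F - {e}) - {e2} = F - {e}" using True by auto
    moreover have "(p = x \<and> q = y) \<or> (p = y \<and> q = x)" using True e2(2) by (auto simp: doubleton_eq_iff)
    ultimately show ?thesis using assms(3) reach_sym by metis
  next
    case False
    then have e2F: "e2 \<in> F - {e}" using e2 by auto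
    define K where "K = F - {e} - {e2}"
    have into_Fe: "\<And>s t. reach K s t \<Longrightarrow> reach (F - {e}) s t" by (rule reach_mono) (auto simp: K_def)
    have into_Fe2: "\<And>s t. reach K s t \<Longrightarrow> reach (F - {e2}) s t" by (rule reach_mono) (auto simp: K_def)
    have pq: "reach (F - {e}) p q" using e2F e2(2) reach_edge by metis
    show ?thesis
    proof
      assume "reach (insert {x,y} (F - {e}) - {e2}) p q"
      moreover have "insert {x,y} (F - {e}) - {e2} = insert {x,y} K" unfolding K_def using False by auto
      ultimately have "reach K p q \<or> (reach K p x \<and> reach K y q) \<or> (reach K p y \<and> reach K x q)"
        using reach_insert_cases by metis
      then show False
      proof (elim disjE conjE)
        assume "reach K p q"
        then have "reach (F - {e2}) p q" by (rule into_Fe2)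
        then show False using assms(1) e2F e2(2) unfolding forest_def by blast
      next
        assume "reach K p x" "reach K y q"
        then have "reach (F - {e}) x y" using into_Fe pq reach_sym reach_trans by metis
        then show False using assms(3) by simp
      next
        assume "reach K p y" "reach K x q"
        then have "reach (F - {e}) x y" using into_Fe pq reach_sym reach_trans by metis
        then show False using assms(3) by simp
      qed
    qed
  qed
qed

lemma MSF_light_path:
  assumes fin: "finite V" and met: "metric_on V d"
    and msf: "is_MSF V d (SDG V d r) F"
    and xy: "x \<in> V" "y \<in> V" "x \<noteq> y" "d x y \<le> r x" "d x y \<le> r y" "d x y < L"
  shows "reach {e\<in>F. edge_weight d e < L} x y"
proof (rule ccontr)
  define G where "G = {e\<in>F. edge_weight d e < L}"
  assume "\<not> reach {e\<in>F. edge_weight d e < L} x y"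
  then have nrG: "\<not> reach G x y" unfolding G_def .
  have FS: "F \<subseteq> SDG V d r" and forF: "forest F"
    and spanF: "\<forall>u\<in>V. \<forall>v\<in>V. reach F u v \<longleftrightarrow> reach (SDG V d r) u v"
    using msf unfolding is_MSF_def spanning_forest_def by blast+
  have finF: "finite F" using FS SDG_finite[OF fin] finite_subset by blast
  have xyS: "{x,y} \<in> SDG V d r" unfolding SDG_def using xy by blast
  have rF: "reach F x y" using spanF xy reach_edge[OF xyS] by blast
  have "\<forall>e\<in>F. \<exists>a b. e = {a,b}" using FS SDG_elem by blast
  then obtain e where e: "e \<in> F - G" "\<not> reach (F - {e}) x y"
    using forest_separating_edge[OF finF forF _ rF nrG] unfolding G_def by blast
  obtain a b where ab: "e = {a,b}" using FS e SDG_elem by blast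
  define F' where "F' = insert {x,y} (F - {e})"
  have new_edge: "{x,y} \<notin> F - {e}" using e(2) reach_edge by metis
  have "spanning_forest V (SDG V d r) F'"
    unfolding spanning_forest_def
  proof (intro conjI)
    show "F' \<subseteq> SDG V d r" unfolding F'_def using FS xyS by auto
    show "forest F'" unfolding F'_def using forF e by (intro exchange_forest) auto
    show "\<forall>u\<in>V. \<forall>v\<in>V. reach F' u v = reach (SDG V d r) u v"
      unfolding F'_def using exchange_reach_iff[OF _ ab rF e(2)] e(1) spanF by simp
  qed
  then have "graph_weight d F \<le> graph_weight d F'" using msf unfolding is_MSF_def by blast
  moreover have "graph_weight d F = edge_weight d e + (\<Sum>e\<in>F - {e}. edge_weight d e)"
    unfolding graph_weight_def using finF e(1) by (simp add: sum.remove)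
  moreover have "graph_weight d F' = d x y + (\<Sum>e\<in>F - {e}. edge_weight d e)"
    unfolding graph_weight_def F'_def using finF new_edge metric_edge_weight[OF met xy(1,2)] by simp
  moreover have "L \<le> edge_weight d e" using e(1) unfolding G_def by auto
  ultimately show False using xy(6) by linarith
qed

section \<open>Connecting separated points is expensive\<close>

text \<open>The bump of height L/2 centred at s; bumps at L-separated centres have
  disjoint supports and are 1-Lipschitz.\<close>
definition bump :: "('a \<Rightarrow> 'a \<Rightarrow> real) \<Rightarrow> real \<Rightarrow> 'a \<Rightarrow> 'a \<Rightarrow> real" where
  "bump d L s x = max 0 (L/2 - d s x)"

lemma bump_nonneg: "0 \<le> bump d L s x"
  unfolding bump_def by simp

lemma bump_zero_iff: "bump d L s x = 0 \<longleftrightarrow> \<not> 0 < bump d L s x"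
  using bump_nonneg[of d L s x] by linarith

lemma bump_pos: "0 < bump d L s x \<Longrightarrow> d s x < L/2 \<and> bump d L s x = L/2 - d s x"
  unfolding bump_def by auto

lemma bump_lipschitz:
  assumes "metric_on V d" "s \<in> V" "p \<in> V" "q \<in> V"
  shows "\<bar>bump d L s p - bump d L s q\<bar> \<le> d p q"
proof -
  have "d s p \<le> d s q + d q p" "d s q \<le> d s p + d p q" "d q p = d p q"
    using metric_tri[OF assms(1)] metric_sym[OF assms(1)] assms(2-4) by blast+
  then show ?thesis unfolding bump_def by (auto simp: max_def abs_le_iff)
qed

lemma bump_supports_disjoint:
  assumes "metric_on V d" "S \<subseteq> V" "\<forall>x\<in>S. \<forall>y\<in>S. x \<noteq> y \<longrightarrow> L \<le> d x y"
    and "x \<in> V" "s \<in> S" "s' \<in> S" "0 < bump d L s x" "0 < bump d L s' x"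
  shows "s = s'"
proof (rule ccontr)
  assume "s \<noteq> s'"
  then have "L \<le> d s s'" using assms(3,5,6) by blast
  moreover have "d s s' \<le> d s x + d x s'" "d x s' = d s' x"
    using metric_tri[OF assms(1)] metric_sym[OF assms(1)] assms(2,4-6) by blast+
  moreover have "d s x < L/2" "d s' x < L/2" using bump_pos[OF assms(7)] bump_pos[OF assms(8)] by auto
  ultimately show False by linarith
qed

lemma two_bumps_le_dist:
  assumes met: "metric_on V d" and SV: "S \<subseteq> V" and sep: "\<forall>x\<in>S. \<forall>y\<in>S. x \<noteq> y \<longrightarrow> L \<le> d x y"
    and s: "sp \<in> S" "sq \<in> S" "sp \<noteq> sq" "0 < bump d L sp p" "0 < bump d L sq q"
    and pq: "p \<in> V" "q \<in> V"
  shows "bump d L sp p + bump d L sq q \<le> d p q"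
proof -
  have "d sp sq \<le> d sp p + d p sq" "d p sq \<le> d p q + d q sq" "d q sq = d sq q"
    using metric_tri[OF met] metric_sym[OF met] s(1,2) SV pq by blast+
  moreover have "L \<le> d sp sq" using sep s(1-3) by blast
  moreover have "bump d L sp p = L/2 - d sp p" "bump d L sq q = L/2 - d sq q"
    using bump_pos[OF s(4)] bump_pos[OF s(5)] by auto
  ultimately show ?thesis by linarith
qed

text \<open>Since at most two bumps are nonzero at the ends of an edge {p,q}, the total
  change of all bumps along the edge is at most its length.\<close>
lemma bumps_change_le_dist:
  assumes met: "metric_on V d" and SV: "S \<subseteq> V" and finS: "finite S"
    and sep: "\<forall>x\<in>S. \<forall>y\<in>S. x \<noteq> y \<longrightarrow> L \<le> d x y" and pq: "p \<in> V" "q \<in> V"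
  shows "(\<Sum>s\<in>S. \<bar>bump d L s p - bump d L s q\<bar>) \<le> d p q"
proof -
  note disj = bump_supports_disjoint[OF met SV sep]
  define A where "A = {s\<in>S. 0 < bump d L s p \<or> 0 < bump d L s q}"
  have sum_A: "(\<Sum>s\<in>S. \<bar>bump d L s p - bump d L s q\<bar>) = (\<Sum>s\<in>A. \<bar>bump d L s p - bump d L s q\<bar>)"
  proof (rule sum.mono_neutral_right)
    show "\<forall>s\<in>S - A. \<bar>bump d L s p - bump d L s q\<bar> = 0"
    proof
      fix s assume "s \<in> S - A"
      then have "bump d L s p = 0" "bump d L s q = 0" unfolding A_def bump_zero_iff by auto
      then show "\<bar>bump d L s p - bump d L s q\<bar> = 0" by simp
    qed
  qed (use finS in \<open>auto simp: A_def\<close>)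
  show ?thesis
  proof (cases "\<exists>sp\<in>S. \<exists>sq\<in>S. sp \<noteq> sq \<and> 0 < bump d L sp p \<and> 0 < bump d L sq q")
    case True
    then obtain sp sq where s: "sp \<in> S" "sq \<in> S" "sp \<noteq> sq" "0 < bump d L sp p" "0 < bump d L sq q"
      by blast
    have at_p: "t = sp" if "t \<in> S" "0 < bump d L t p" for t using disj[OF pq(1) that(1) s(1) that(2) s(4)] .
    have at_q: "t = sq" if "t \<in> S" "0 < bump d L t q" for t using disj[OF pq(2) that(1) s(2) that(2) s(5)] .
    have "A = {sp, sq}"
    proof
      show "A \<subseteq> {sp, sq}" unfolding A_def using at_p at_q by blast
      show "{sp, sq} \<subseteq> A" unfolding A_def using s by blast
    qed
    moreover have "bump d L sp q = 0" "bump d L sq p = 0"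
      unfolding bump_zero_iff using s(1-3) at_p at_q by metis+
    ultimately have "(\<Sum>s\<in>A. \<bar>bump d L s p - bump d L s q\<bar>) = bump d L sp p + bump d L sq q"
      using s(3) bump_nonneg[of d L] by simp
    also have "\<dots> \<le> d p q" by (rule two_bumps_le_dist[OF met SV sep s pq])
    finally show ?thesis using sum_A by simp
  next
    case False
    have single: "s = t" if st: "s \<in> A" "t \<in> A" for s t
    proof -
      from st have S: "s \<in> S" "t \<in> S" unfolding A_def by auto
      from st consider "0 < bump d L s p" "0 < bump d L t p" | "0 < bump d L s p" "0 < bump d L t q"
        | "0 < bump d L s q" "0 < bump d L t p" | "0 < bump d L s q" "0 < bump d L t q"
        unfolding A_def by blast
      then show ?thesis
      proof cases
        case 1 then show ?thesis using disj[OF pq(1) S] by blast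
      next
        case 2 then show ?thesis using False S by blast
      next
        case 3 then show ?thesis using False S by metis
      next
        case 4 then show ?thesis using disj[OF pq(2) S] by blast
      qed
    qed
    have "A \<subseteq> S" unfolding A_def by blast
    then consider "A = {}" | s0 where "s0 \<in> S" "A = {s0}" using single by blast
    then show ?thesis
    proof cases
      case 1
      then show ?thesis using sum_A metric_nonneg[OF met pq] by simp
    next
      case 2
      then show ?thesis using sum_A bump_lipschitz[OF met _ pq] SV by auto
    qed
  qed
qed

text \<open>Packing bound: a graph T connecting m \<ge> 2 pairwise L-separated points weighs
  at least m L / 2.  Each bump rises from 0 to L/2 along a path inside T, while
  along any edge the bumps change by at most its length in total.\<close>
lemma separated_points_weight:
  assumes met: "metric_on V d" and finT: "finite T"
    and Tp: "\<forall>e\<in>T. \<exists>p q. e = {p,q} \<and> p \<in> V \<and> q \<in> V"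
    and SV: "S \<subseteq> V" and finS: "finite S"
    and sep: "\<forall>x\<in>S. \<forall>y\<in>S. x \<noteq> y \<longrightarrow> L \<le> d x y" and Lpos: "0 < L"
    and conn: "\<forall>x\<in>S. \<forall>y\<in>S. reach T x y" and two: "2 \<le> card S"
  shows "real (card S) * L / 2 \<le> graph_weight d T"
proof -
  define change where "change s = edge_weight (\<lambda>p q. \<bar>bump d L s p - bump d L s q\<bar>)" for s
  have rise: "L/2 \<le> (\<Sum>e\<in>T. change s e)" if s: "s \<in> S" for s
  proof -
    have "\<not> S \<subseteq> {s}" using two card_mono[of "{s}" S] by auto
    then obtain s' where s': "s' \<in> S" "s' \<noteq> s" by blast
    have "\<forall>e\<in>T. \<exists>p q. e = {p,q}" using Tp by blast
    moreover have "reach T s s'" using conn s s'(1) by blast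
    ultimately have "\<bar>bump d L s s - bump d L s s'\<bar> \<le> (\<Sum>e\<in>T. change s e)"
      unfolding change_def by (rule variation_le_edge_sum[OF finT])
    moreover have "d s s = 0" using metric_zero[OF met] SV s by blast
    then have "bump d L s s = L/2" unfolding bump_def using Lpos by simp
    moreover have "L \<le> d s s'" using sep s s' by metis
    then have "bump d L s s' = 0" unfolding bump_def using Lpos by simp
    ultimately show ?thesis by simp
  qed
  have "real (card S) * L / 2 = (\<Sum>s\<in>S. L/2)" by simp
  also have "\<dots> \<le> (\<Sum>s\<in>S. \<Sum>e\<in>T. change s e)" by (rule sum_mono) (rule rise)
  also have "\<dots> = (\<Sum>e\<in>T. \<Sum>s\<in>S. change s e)" by (rule sum.swap)
  also have "\<dots> \<le> (\<Sum>e\<in>T. edge_weight d e)"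
  proof (rule sum_mono)
    fix e assume "e \<in> T"
    then obtain p q where e: "e = {p,q}" "p \<in> V" "q \<in> V" using Tp by blast
    have "change s e = \<bar>bump d L s p - bump d L s q\<bar>" for s
      unfolding change_def e(1) by (rule edge_weight_eq) (simp add: abs_minus_commute)
    then have "(\<Sum>s\<in>S. change s e) = (\<Sum>s\<in>S. \<bar>bump d L s p - bump d L s q\<bar>)" by simp
    also have "\<dots> \<le> d p q" by (rule bumps_change_le_dist[OF met SV finS sep e(2,3)])
    also have "\<dots> = edge_weight d e" using e metric_edge_weight[OF met] by simp
    finally show "(\<Sum>s\<in>S. change s e) \<le> edge_weight d e" .
  qed
  finally show ?thesis unfolding graph_weight_def .
qed

section \<open>Harmonic estimate for inverse ranks\<close>

text \<open>The inductive step of the harmonic estimate, from ln (1 - 1/(k+1)) \<le> - 1/(k+1).\<close>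
lemma inverse_succ_plus_ln_le:
  fixes k :: real
  assumes "1 \<le> k"
  shows "1 / (k + 1) + ln k \<le> ln (k + 1)"
proof -
  have "ln (k / (k + 1)) \<le> k / (k + 1) - 1" using assms by (intro ln_le_minus_one) auto
  moreover have "ln (k / (k + 1)) = ln k - ln (k + 1)" using assms by (intro ln_divide_pos) auto
  moreover have "k / (k + 1) - 1 = - 1 / (k + 1)" using assms by (simp add: field_simps)
  ultimately show ?thesis by simp
qed

text \<open>If x has rank k (the number of y \<in> X with w x \<le> w y), the terms 1/(k+1) sum to
  at most H_{|X|+1} - 1 \<le> ln (|X| + 1); ties only increase the ranks.\<close>
lemma sum_inverse_rank_le_ln:
  fixes w :: "'e \<Rightarrow> real"
  assumes "finite X"
  shows "(\<Sum>x\<in>X. 1 / (real (card {y\<in>X. w x \<le> w y}) + 1)) \<le> ln (real (card X) + 1)"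
  using assms
proof (induction "card X" arbitrary: X rule: less_induct)
  case less
  show ?case
  proof (cases "X = {}")
    case True then show ?thesis by simp
  next
    case False
    have "Min (w ` X) \<in> w ` X" using False less.prems by simp
    then obtain m where m: "m \<in> X" "w m = Min (w ` X)" by auto
    have "w m \<le> w y" if "y \<in> X" for y using m that less.prems by simp
    then have "{y\<in>X. w m \<le> w y} = X" by blast
    then have rank_m: "card {y\<in>X. w m \<le> w y} = card X" by simp
    define X' where "X' = X - {m}"
    have finX': "finite X'" unfolding X'_def using less.prems by simp
    have "card X' = card X - 1" "0 < card X" unfolding X'_def using m less.prems card_gt_0_iff by auto
    then have "card X' + 1 = card X" by simp
    then have card_X': "real (card X') + 1 = real (card X)" by linarith
    have "(\<Sum>x\<in>X. 1 / (real (card {y\<in>X. w x \<le> w y}) + 1))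
        = 1 / (real (card X) + 1) + (\<Sum>x\<in>X'. 1 / (real (card {y\<in>X. w x \<le> w y}) + 1))"
      unfolding X'_def using less.prems m rank_m by (simp add: sum.remove)
    also have "(\<Sum>x\<in>X'. 1 / (real (card {y\<in>X. w x \<le> w y}) + 1))
        \<le> (\<Sum>x\<in>X'. 1 / (real (card {y\<in>X'. w x \<le> w y}) + 1))"
    proof (rule sum_mono)
      fix x assume "x \<in> X'"
      have "card {y\<in>X'. w x \<le> w y} \<le> card {y\<in>X. w x \<le> w y}"
        by (rule card_mono) (use less.prems in \<open>auto simp: X'_def\<close>)
      then show "1 / (real (card {y\<in>X. w x \<le> w y}) + 1) \<le> 1 / (real (card {y\<in>X'. w x \<le> w y}) + 1)"
        by (intro divide_left_mono) auto
    qed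
    also have "(\<Sum>x\<in>X'. 1 / (real (card {y\<in>X'. w x \<le> w y}) + 1)) \<le> ln (real (card X') + 1)"
      using finX' card_X' by (intro less.hyps) linarith+
    also have "1 / (real (card X) + 1) + ln (real (card X') + 1) \<le> ln (real (card X) + 1)"
      unfolding card_X' by (rule inverse_succ_plus_ln_le) (use card_X' in linarith)
    finally show ?thesis by simp
  qed
qed

lemma sum_le_by_inverse_rank:
  fixes w :: "'e \<Rightarrow> real"
  assumes "finite X" "0 \<le> W" "\<And>x. x \<in> X \<Longrightarrow> (real (card {y\<in>X. w x \<le> w y}) + 1) * w x \<le> W"
  shows "(\<Sum>x\<in>X. w x) \<le> W * ln (real (card X) + 1)"
proof -
  have "(\<Sum>x\<in>X. w x) \<le> (\<Sum>x\<in>X. W * (1 / (real (card {y\<in>X. w x \<le> w y}) + 1)))"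
  proof (rule sum_mono)
    fix x assume "x \<in> X"
    then show "w x \<le> W * (1 / (real (card {y\<in>X. w x \<le> w y}) + 1))"
      using assms(3) by (simp add: field_simps)
  qed
  also have "\<dots> = W * (\<Sum>x\<in>X. 1 / (real (card {y\<in>X. w x \<le> w y}) + 1))"
    by (simp add: sum_distrib_left)
  also have "\<dots> \<le> W * ln (real (card X) + 1)"
    using sum_inverse_rank_le_ln[OF assms(1), of w] assms(2) by (rule mult_left_mono)
  finally show ?thesis .
qed

text \<open>Since ln (5/4) \<le> 1, the logarithm to base 5/4 dominates the natural logarithm.\<close>
lemma log_five_fourths_bounds:
  fixes n :: nat
  shows "0 \<le> log (5/4) (real n)" and "ln (real n) \<le> log (5/4) (real n)"
proof -
  have base: "0 < ln (5/4::real)" "ln (5/4::real) \<le> 1" using ln_le_minus_one[of "5/4::real"] by auto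
  have ln_n: "0 \<le> ln (real n)" by (cases "n = 0") auto
  show "0 \<le> log (5/4) (real n)" unfolding log_def using ln_n base by simp
  have "ln (real n) * ln (5/4) \<le> ln (real n)" using ln_n base by (simp add: mult_left_le)
  then show "ln (real n) \<le> log (5/4) (real n)" unfolding log_def using base by (simp add: field_simps)
qed

lemma heavy_edges_split_components:
  fixes w :: "'a set \<Rightarrow> real"
  assumes "finite U" "U \<noteq> {}" "finite F" "forest F"
    and "\<forall>e\<in>F. L \<le> w e \<longrightarrow> (\<exists>a b. e = {a,b} \<and> a \<in> U \<and> b \<in> U)"
  shows "card {e\<in>F. L \<le> w e} + 1 \<le> card (component {e\<in>F. w e < L} ` U)"
proof -
  define G where "G = {e\<in>F. w e < L}"
  define H where "H = {e\<in>F. L \<le> w e}"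
  have F: "G \<union> H = F" "G \<inter> H = {}" unfolding G_def H_def by auto
  have "card H + card (component (G \<union> H) ` U) \<le> card (component G ` U)"
  proof (rule card_components_add_bridges)
    show "finite H" unfolding H_def using assms(3) by simp
    show "\<forall>e\<in>H. \<exists>u v. e = {u,v} \<and> u \<in> U \<and> v \<in> U \<and> \<not> reach (G \<union> H - {e}) u v"
    proof
      fix e assume "e \<in> H"
      then obtain a b where "e \<in> F" "e = {a,b}" "a \<in> U" "b \<in> U" using assms(5) unfolding H_def by blast
      moreover have "\<not> reach (F - {e}) a b" using assms(4) calculation(1,2) unfolding forest_def by blast
      ultimately show "\<exists>u v. e = {u,v} \<and> u \<in> U \<and> v \<in> U \<and> \<not> reach (G \<union> H - {e}) u v"
        unfolding F(1) by blast
    qed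
  qed (use assms(1) F(2) in simp_all)
  moreover have "1 \<le> card (component (G \<union> H) ` U)"
    using assms(1,2) by (simp add: Suc_le_eq card_gt_0_iff)
  ultimately show ?thesis unfolding G_def H_def by linarith
qed

lemma SDG_heavy_edge:
  assumes met: "metric_on V d" and "e \<in> SDG V d r" "L \<le> edge_weight d e"
  shows "\<exists>a b. e = {a,b} \<and> a \<in> {x\<in>V. L \<le> r x} \<and> b \<in> {x\<in>V. L \<le> r x}"
proof -
  obtain a b where "e = {a,b}" "a \<in> V" "b \<in> V" "d a b \<le> r a" "d a b \<le> r b"
    using assms(2) SDG_elem by blast
  moreover have "edge_weight d e = d a b" using calculation(1-3) metric_edge_weight[OF met] by simp
  ultimately have "a \<in> {x\<in>V. L \<le> r x}" "b \<in> {x\<in>V. L \<le> r x}" using assms(3) by auto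
  then show ?thesis using \<open>e = {a,b}\<close> by blast
qed

lemma MSF_separated_representatives:
  assumes fin: "finite V" and met: "metric_on V d" and msf: "is_MSF V d (SDG V d r) F"
  obtains S where "S \<subseteq> {x\<in>V. L \<le> r x}"
    and "card S = card (component {e\<in>F. edge_weight d e < L} ` {x\<in>V. L \<le> r x})"
    and "\<forall>x\<in>S. \<forall>y\<in>S. x \<noteq> y \<longrightarrow> L \<le> d x y"
proof -
  define light where "light = {e\<in>F. edge_weight d e < L}"
  obtain S where S: "S \<subseteq> {x\<in>V. L \<le> r x}" "card S = card (component light ` {x\<in>V. L \<le> r x})"
      "inj_on (component light) S"
    using exists_representatives[of "{x\<in>V. L \<le> r x}"] fin by auto
  have "L \<le> d x y" if xy: "x \<in> S" "y \<in> S" "x \<noteq> y" for x y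
  proof (rule ccontr)
    assume "\<not> L \<le> d x y"
    then have "reach light x y"
      unfolding light_def using xy S(1) by (intro MSF_light_path[OF fin met msf]) auto
    then have "component light x = component light y" by (simp only: component_eq_iff)
    then show False using inj_onD[OF S(3)] xy by blast
  qed
  then show thesis using S(1,2) that unfolding light_def by blast
qed

lemma MSF_edge_rank_bound:
  assumes fin: "finite V" and met: "metric_on V d"
    and msf: "is_MSF V d (SDG V d r) F" and eF: "e \<in> F"
    and finT: "finite T" and Tp: "\<forall>e\<in>T. \<exists>p q. e = {p,q} \<and> p \<in> V \<and> q \<in> V"
    and conn: "\<forall>x\<in>V. \<forall>y\<in>V. reach T x y"
  shows "(real (card {e'\<in>F. edge_weight d e \<le> edge_weight d e'}) + 1) * edge_weight d e
           \<le> 2 * graph_weight d T"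
proof -
  have FS: "F \<subseteq> SDG V d r" and forF: "forest F"
    using msf unfolding is_MSF_def spanning_forest_def by blast+
  have finF: "finite F" using FS SDG_finite[OF fin] finite_subset by blast
  define L where "L = edge_weight d e"
  define heavy where "heavy = {e'\<in>F. L \<le> edge_weight d e'}"
  define U where "U = {x\<in>V. L \<le> r x}"
  obtain u v where uv: "e = {u,v}" "u \<in> V" "v \<in> V" "u \<noteq> v"
    using FS eF SDG_elem by blast
  have "0 < L"
    unfolding L_def uv(1) using metric_edge_weight[OF met uv(2,3)] metric_pos[OF met uv(2-4)] by simp
  have "\<exists>a b. e = {a,b} \<and> a \<in> U \<and> b \<in> U"
    unfolding U_def by (rule SDG_heavy_edge[OF met subsetD[OF FS eF]]) (simp add: L_def)
  then have "U \<noteq> {}" by blast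
  have "card heavy + 1 \<le> card (component {e'\<in>F. edge_weight d e' < L} ` U)"
    unfolding heavy_def
  proof (rule heavy_edges_split_components)
    show "\<forall>e'\<in>F. L \<le> edge_weight d e' \<longrightarrow> (\<exists>a b. e' = {a,b} \<and> a \<in> U \<and> b \<in> U)"
      unfolding U_def using SDG_heavy_edge[OF met subsetD[OF FS]] by blast
    show "finite U" unfolding U_def using fin by simp
  qed (use \<open>U \<noteq> {}\<close> finF forF in auto)
  moreover obtain S where S: "S \<subseteq> U" "card S = card (component {e'\<in>F. edge_weight d e' < L} ` U)"
      and sep: "\<forall>x\<in>S. \<forall>y\<in>S. x \<noteq> y \<longrightarrow> L \<le> d x y"
    using MSF_separated_representatives[OF fin met msf] unfolding U_def by blast
  ultimately have card_S: "real (card heavy) + 1 \<le> real (card S)" by linarith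
  have SV: "S \<subseteq> V" using S(1) unfolding U_def by auto
  then have "finite S" using fin by (rule finite_subset)
  moreover have "\<forall>x\<in>S. \<forall>y\<in>S. reach T x y" using conn SV by blast
  moreover have "heavy \<noteq> {}" using eF unfolding heavy_def L_def by blast
  then have "0 < card heavy" using finF unfolding heavy_def by (simp add: card_gt_0_iff)
  then have "2 \<le> card S" using card_S by linarith
  ultimately have "real (card S) * L / 2 \<le> graph_weight d T"
    using separated_points_weight[OF met finT Tp SV _ sep \<open>0 < L\<close>] by blast
  then have "(real (card heavy) + 1) * L \<le> 2 * graph_weight d T"
    using mult_right_mono[OF card_S, of L] \<open>0 < L\<close> by linarith
  then show ?thesis unfolding heavy_def L_def .
qed

theorem theorem1:
  fixes V :: "'a set" and d :: "'a \<Rightarrow> 'a \<Rightarrow> real" and r :: "'a \<Rightarrow> real"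
    and F T :: "'a set set" and n :: nat
  assumes "finite V" and "card V = n"
    and "metric_on V d"
    and "\<forall>u\<in>V. r u > 0"
    and "is_MSF V d (SDG V d r) F"
    and "is_MST V d T"
  shows "graph_weight d F \<le> 2 * log (5/4) (real n) * graph_weight d T"
proof -
  have FS: "F \<subseteq> SDG V d r" and forF: "forest F"
    using assms(5) unfolding is_MSF_def spanning_forest_def by blast+
  have finF: "finite F" using FS SDG_finite[OF assms(1)] finite_subset by blast
  have F_edges: "\<forall>e\<in>F. \<exists>u v. e = {u,v} \<and> u \<in> V \<and> v \<in> V" using FS SDG_elem by blast
  note T = MST_connected[OF assms(1,6)]
  define W where "W = graph_weight d T"
  have W: "0 \<le> W" unfolding W_def using graph_weight_nonneg[OF assms(3) T(2)] .
  show ?thesis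
  proof (cases "F = {}")
    case True
    then show ?thesis using W log_five_fourths_bounds(1)[of n] by (simp add: graph_weight_def W_def)
  next
    case False
    then have "V \<noteq> {}" using F_edges by blast
    then have "card F + 1 \<le> n" using forest_card_less[OF assms(1) _ forF F_edges] assms(2) by simp
    then have card_F: "real (card F) + 1 \<le> real n" by linarith
    have "graph_weight d F \<le> 2 * W * ln (real (card F) + 1)"
      unfolding graph_weight_def
    proof (rule sum_le_by_inverse_rank[OF finF])
      show "0 \<le> 2 * W" using W by simp
      show "(real (card {e'\<in>F. edge_weight d e \<le> edge_weight d e'}) + 1) * edge_weight d e \<le> 2 * W"
        if "e \<in> F" for e unfolding W_def by (rule MSF_edge_rank_bound[OF assms(1,3,5) that T])
    qed
    also have "\<dots> \<le> 2 * W * ln (real n)" using card_F W by (intro mult_left_mono) auto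
    also have "\<dots> \<le> 2 * W * log (5/4) (real n)"
      using log_five_fourths_bounds(2)[of n] W by (intro mult_left_mono) auto
    finally show ?thesis unfolding W_def by (simp add: algebra_simps)
  qed
qed

end
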